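(* For all integers $n\ge0$, $0\le k\le n$, and all $\beta,\varphi\in[0,2\pi)$, $$[\mathcal D Z^{n,k}](\beta,\varphi)=\frac{2e^{i(n-2k)\varphi}}{n+1}\times\begin{cases}\cos[(n+1)(\beta-\varphi)], & n \text{ even},\\ i\sin[(n+1)(\beta-\varphi)], & n\text{ odd}.\end{cases}$$
   Context: Let $\mathbb D$ be the open unit disc in $\mathbb R^2\cong\mathbb C$ ($z=x^1+ix^2$). The scalar fan-beam Radon transform of a (complex-valued) function $a$ on $\mathbb D$ is defined for $\beta,\varphi\in[0,2\pi)$ with $\cos(\beta-\varphi)\ge0$ by $$[\mathcal D a](\beta,\varphi)=\int_0^{2\cos(\beta-\varphi)}a(\cos\beta-l\cos\varphi,\ \sin\beta-l\sin\varphi)\,dl,$$ i.e. the integral over the chord of the unit circle starting at $e^{i\beta}$ in direction $-(\cos\varphi,\sin\varphi)$; and for $\cos(\beta-\varphi)<0$ by $[\mathcal D a](\beta,\varphi)=-[\mathcal D a](\beta,\varphi+\pi)$ (angle taken mod $2\pi$). Zernike polynomials (paper's numbering), for $n\ge0$, $0\le k\le n$: $$Z^{n,k}(z,\bar z)=\sum_{s=0}^{k}\binom{k}{s}\binom{n-k}{s}z^{n-k-s}(1-z\bar z)^s(-\bar z)^{k-s}\ \ (0\le k\le [n/2]),\qquad Z^{n,k}=(-1)^n\overline{Z^{n,n-k}}\ \ ([n/2]<k\le n),$$ where $[\cdot]$ is the integer part. *)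

theory Defs
  imports "HOL-Analysis.Analysis"
begin

text \<open>Chord integral: integral over the chord of the unit circle starting at
  e^{i beta} in direction -(cos phi, sin phi), of length 2 cos(beta - phi).\<close>
definition chord_integral :: "(complex \<Rightarrow> complex) \<Rightarrow> real \<Rightarrow> real \<Rightarrow> complex" where
  "chord_integral a \<beta> \<phi> =
     integral {0 .. 2 * cos (\<beta> - \<phi>)}
       (\<lambda>l. a (Complex (cos \<beta> - l * cos \<phi>) (sin \<beta> - l * sin \<phi>)))"

text \<open>For cos(beta-phi) < 0 it is minus the value at
  phi + pi (the integrand depends on phi only through cos phi, sin phi, so reducing
  phi + pi mod 2 pi makes no difference).\<close>
definition fanbeam :: "(complex \<Rightarrow> complex) \<Rightarrow> real \<Rightarrow> real \<Rightarrow> complex" where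
  "fanbeam a \<beta> \<phi> =
     (if cos (\<beta> - \<phi>) \<ge> 0 then chord_integral a \<beta> \<phi>
      else - chord_integral a \<beta> (\<phi> + pi))"

definition zernike_low :: "nat \<Rightarrow> nat \<Rightarrow> complex \<Rightarrow> complex" where
  "zernike_low n k z =
     (\<Sum>s = 0..k. of_nat (k choose s) * of_nat ((n - k) choose s)
        * z ^ (n - k - s) * (1 - z * cnj z) ^ s * (- cnj z) ^ (k - s))"

definition zernike :: "nat \<Rightarrow> nat \<Rightarrow> complex \<Rightarrow> complex" where
  "zernike n k z =
     (if k \<le> n div 2 then zernike_low n k z
      else (-1) ^ n * cnj (zernike_low n (n - k) z))"

end

theory Submission
  imports Defs "HOL-Computational_Algebra.Polynomial"
begin

(*
  Treat zbar as an independent variable zeta, so that Z^{n,k} becomes a polynomial M_k(z, zeta).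
  On the chord z = e^{i beta} - l e^{i phi}, zeta = e^{-i beta} - l e^{-i phi} this polynomial has
  an explicit antiderivative in l: a multiple of z^{n+1} plus a combination of polynomials
  Psi_j(z, zeta), 1 <= j <= k, with d Psi_j/dz = M_j and d Psi_j/dzeta = -M_{j-1}. Each Psi_j is
  divisible by 1 - z zeta, so it vanishes at both endpoints of the chord, which lie on the unit
  circle; the integral is therefore a difference of two (n+1)-st powers of the endpoints
  e^{i beta} and -e^{i(2 phi - beta)}, which gives the formula. The case cos(beta - phi) < 0 and
  the case k > n/2 follow from the symmetries phi -> phi + pi and Z^{n,k} = (-1)^n conj Z^{n,n-k}.
*)

lemma coeff_linear_poly_power':
  fixes a b :: "'a::comm_semiring_1"
  shows "coeff ([:a, b:] ^ n) i = of_nat (n choose i) * b ^ i * a ^ (n - i)"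
proof (cases "i \<le> n")
  case True
  then show ?thesis by (rule coeff_linear_poly_power)
next
  case False
  have "degree ([:a, b:] ^ n) \<le> n"
    by (rule order.trans[OF degree_power_le]) (simp add: degree_pCons_le)
  with False show ?thesis by (simp add: coeff_eq_0 binomial_eq_0)
qed

(*
  [:z, 1:] is X + z and [:1 - \<zeta> * z, - \<zeta>:] is 1 - \<zeta> (X + z). Computing the coefficients of
  their product in two ways gives the identity behind zernike_low_eq_bivariate.
*)
lemma coeff_shifted_binomial_product:
  fixes z \<zeta> :: "'a::comm_ring_1"
  shows "coeff ([:z, 1:] ^ a * [:1 - \<zeta> * z, - \<zeta>:] ^ m) i =
    (\<Sum>j\<le>m. of_nat (m choose j) * of_nat ((a + j) choose i) * (- \<zeta>) ^ j * z ^ (a + j - i))"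
proof -
  have "[:1 - \<zeta> * z, - \<zeta>:] = smult (- \<zeta>) [:z, 1:] + 1"
    by (simp add: one_pCons algebra_simps)
  then have "[:1 - \<zeta> * z, - \<zeta>:] ^ m =
      (\<Sum>j\<le>m. of_nat (m choose j) * smult (- \<zeta>) [:z, 1:] ^ j * 1 ^ (m - j))"
    by (simp only: binomial_ring)
  also have "\<dots> = (\<Sum>j\<le>m. smult (of_nat (m choose j) * (- \<zeta>) ^ j) ([:z, 1:] ^ j))"
    by (intro sum.cong refl) (simp only: smult_power of_nat_mult_conv_smult smult_smult power_one mult_1_right)
  finally have "[:z, 1:] ^ a * [:1 - \<zeta> * z, - \<zeta>:] ^ m =
      (\<Sum>j\<le>m. smult (of_nat (m choose j) * (- \<zeta>) ^ j) ([:z, 1:] ^ (a + j)))"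
    by (simp add: sum_distrib_left power_add)
  then show ?thesis
    by (simp add: coeff_sum coeff_linear_poly_power' mult_ac)
qed

lemma coeff_shifted_binomial_product_convolution:
  fixes z \<zeta> :: "'a::comm_ring_1"
  shows "coeff ([:z, 1:] ^ a * [:1 - \<zeta> * z, - \<zeta>:] ^ m) i =
    (\<Sum>s\<le>i. of_nat (a choose s) * of_nat (m choose (i - s))
       * z ^ (a - s) * (1 - \<zeta> * z) ^ (m - (i - s)) * (- \<zeta>) ^ (i - s))"
  by (simp add: coeff_mult coeff_linear_poly_power' mult_ac)

lemma coeff_shifted_binomial_product_eq_0:
  fixes z \<zeta> :: "'a::comm_ring_1"
  assumes "\<zeta> * z = 1" and "i < m"
  shows "coeff ([:z, 1:] ^ a * [:1 - \<zeta> * z, - \<zeta>:] ^ m) i = 0"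
  unfolding coeff_shifted_binomial_product_convolution using assms by (simp add: power_0_left)

(* \<zeta> stands for cnj z; the powers of 1 - z * cnj z in zernike_low are multiplied out. *)
definition zernike_bivariate :: "nat \<Rightarrow> nat \<Rightarrow> 'a::comm_ring_1 \<Rightarrow> 'a \<Rightarrow> 'a" where
  "zernike_bivariate n k z \<zeta> =
     (\<Sum>i\<le>k. of_nat (k choose i) * of_nat ((n - k + i) choose k) * (- \<zeta>) ^ i * z ^ (n - k + i - k))"

lemma zernike_bivariate_eq_coeff:
  "zernike_bivariate n k z \<zeta> = coeff ([:z, 1:] ^ (n - k) * [:1 - \<zeta> * z, - \<zeta>:] ^ k) k"
  by (simp add: zernike_bivariate_def coeff_shifted_binomial_product)

lemma zernike_low_eq_bivariate: "zernike_low n k z = zernike_bivariate n k z (cnj z)"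
  unfolding zernike_bivariate_eq_coeff coeff_shifted_binomial_product_convolution
    zernike_low_def atLeast0AtMost
  by (intro sum.cong refl) (auto simp: binomial_symmetric[symmetric] mult_ac)

lemma zernike_bivariate_0 [simp]: "zernike_bivariate n 0 z \<zeta> = z ^ n"
  by (simp add: zernike_bivariate_def)

(*
  For 1 \<le> j \<le> n the derivatives in z and in \<zeta> are zernike_bivariate n j and
  - zernike_bivariate n (j - 1), which is what zernike_primitive_dz_sum and
  zernike_primitive_dzeta_sum express. For j = 0 the division by 0 makes it 0.
*)
definition zernike_primitive :: "nat \<Rightarrow> nat \<Rightarrow> 'a::field \<Rightarrow> 'a \<Rightarrow> 'a" where
  "zernike_primitive n j z \<zeta> =
     (\<Sum>i\<le>j. of_nat (j choose i) * of_nat ((n - j + i) choose (j - 1))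
        * (- \<zeta>) ^ i * z ^ (n - j + i - (j - 1))) / of_nat j"

lemma zernike_primitive_eq_0_on_circle:
  assumes "\<zeta> * z = 1"
  shows "zernike_primitive n j z \<zeta> = 0"
proof (cases "j = 0")
  case False
  then have "coeff ([:z, 1:] ^ (n - j) * [:1 - \<zeta> * z, - \<zeta>:] ^ j) (j - 1) = 0"
    using assms by (intro coeff_shifted_binomial_product_eq_0) auto
  then show ?thesis
    using False by (simp add: zernike_primitive_def coeff_shifted_binomial_product)
qed (simp add: zernike_primitive_def)

lemma binomial_pred_times_diff:
  assumes "1 \<le> j"
  shows "(m choose (j - 1)) * (m - (j - 1)) = j * (m choose j)"
  using assms times_binomial_minus1_eq[of j m] binomial_absorb_comp[of m "j - 1"]
  by (simp add: mult.commute)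

lemma zernike_primitive_dz_sum:
  fixes z \<zeta> :: "'a::comm_ring_1"
  assumes "1 \<le> j"
  shows "(\<Sum>i\<le>j. of_nat (j choose i) * of_nat ((n - j + i) choose (j - 1)) * (- \<zeta>) ^ i
            * (of_nat (n - j + i - (j - 1)) * z ^ (n - j + i - (j - 1) - 1)))
       = of_nat j * zernike_bivariate n j z \<zeta>"
  unfolding zernike_bivariate_def sum_distrib_left
proof (intro sum.cong refl)
  fix i
  define m where "m = n - j + i"
  have "m - (j - 1) - 1 = m - j"
    using assms by simp
  then have "of_nat (j choose i) * of_nat (m choose (j - 1)) * (- \<zeta>) ^ i
      * (of_nat (m - (j - 1)) * z ^ (m - (j - 1) - 1))
    = of_nat ((m choose (j - 1)) * (m - (j - 1))) * (of_nat (j choose i) * (- \<zeta>) ^ i * z ^ (m - j))"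
    by (simp only: of_nat_mult mult_ac)
  also have "\<dots> = of_nat j * (of_nat (j choose i) * of_nat (m choose j) * (- \<zeta>) ^ i * z ^ (m - j))"
    unfolding binomial_pred_times_diff[OF assms] by (simp only: of_nat_mult mult_ac)
  finally show "of_nat (j choose i) * of_nat ((n - j + i) choose (j - 1)) * (- \<zeta>) ^ i
      * (of_nat (n - j + i - (j - 1)) * z ^ (n - j + i - (j - 1) - 1))
    = of_nat j * (of_nat (j choose i) * of_nat ((n - j + i) choose j) * (- \<zeta>) ^ i * z ^ (n - j + i - j))"
    unfolding m_def .
qed

lemma zernike_primitive_dzeta_sum:
  fixes z \<zeta> :: "'a::comm_ring_1"
  assumes "1 \<le> j" and "j \<le> n"
  shows "(\<Sum>i\<le>j. of_nat (j choose i) * of_nat ((n - j + i) choose (j - 1))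
            * (of_nat i * (- \<zeta>) ^ (i - 1)) * z ^ (n - j + i - (j - 1)))
       = of_nat j * zernike_bivariate n (j - 1) z \<zeta>"
proof -
  obtain t where j: "j = Suc t"
    using assms(1) by (cases j) auto
  have "(\<Sum>i\<le>j. of_nat (j choose i) * of_nat ((n - j + i) choose (j - 1))
            * (of_nat i * (- \<zeta>) ^ (i - 1)) * z ^ (n - j + i - (j - 1)))
      = (\<Sum>i\<le>t. of_nat (Suc t choose Suc i) * of_nat ((n - t + i) choose t)
            * (of_nat (Suc i) * (- \<zeta>) ^ i) * z ^ (n - t + i - t))"
  proof -
    have "n - Suc t + Suc i = n - t + i" for i
      using assms(2) j by simp
    then show ?thesis
      unfolding j sum.atMost_Suc_shift by (simp only: diff_Suc_1 of_nat_0 mult_zero_left mult_zero_right add_0)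
  qed
  also have "\<dots> = of_nat j * zernike_bivariate n (j - 1) z \<zeta>"
    unfolding j zernike_bivariate_def sum_distrib_left diff_Suc_1
  proof (intro sum.cong refl)
    fix i
    have "of_nat (Suc t choose Suc i) * of_nat ((n - t + i) choose t)
            * (of_nat (Suc i) * (- \<zeta>) ^ i) * z ^ (n - t + i - t)
        = of_nat ((Suc t choose Suc i) * Suc i) * (of_nat ((n - t + i) choose t) * (- \<zeta>) ^ i * z ^ (n - t + i - t))"
      by (simp only: of_nat_mult mult_ac)
    also have "\<dots> = of_nat (Suc t) * (of_nat (t choose i) * of_nat ((n - t + i) choose t) * (- \<zeta>) ^ i * z ^ (n - t + i - t))"
      unfolding Suc_times_binomial_eq[symmetric] by (simp only: of_nat_mult mult_ac)
    finally show "of_nat (Suc t choose Suc i) * of_nat ((n - t + i) choose t)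
            * (of_nat (Suc i) * (- \<zeta>) ^ i) * z ^ (n - t + i - t)
        = of_nat (Suc t) * (of_nat (t choose i) * of_nat ((n - t + i) choose t) * (- \<zeta>) ^ i * z ^ (n - t + i - t))" .
  qed
  finally show ?thesis .
qed

lemma has_field_derivative_monomial_on_line:
  fixes P Q u v w :: "'a::real_normed_field"
  shows "((\<lambda>w. c * (- (Q - w * v)) ^ i * (P - w * u) ^ p) has_field_derivative
     v * (c * (of_nat i * (- (Q - w * v)) ^ (i - 1)) * (P - w * u) ^ p)
     - u * (c * (- (Q - w * v)) ^ i * (of_nat p * (P - w * u) ^ (p - 1)))) (at w)"
  by (auto intro!: derivative_eq_intros simp: algebra_simps)

lemma zernike_primitive_has_derivative_on_line:
  fixes P Q u v w :: "'a::real_normed_field"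
  assumes "1 \<le> j" and "j \<le> n"
  shows "((\<lambda>w. zernike_primitive n j (P - w * u) (Q - w * v)) has_field_derivative
     v * zernike_bivariate n (j - 1) (P - w * u) (Q - w * v)
     - u * zernike_bivariate n j (P - w * u) (Q - w * v)) (at w)"
proof -
  define c where "c i = of_nat (j choose i) * (of_nat ((n - j + i) choose (j - 1)) :: 'a)" for i
  define p where "p i = n - j + i - (j - 1)" for i
  define z where "z = P - w * u"
  define \<zeta> where "\<zeta> = Q - w * v"
  have "((\<lambda>w. zernike_primitive n j (P - w * u) (Q - w * v)) has_field_derivative
     (\<Sum>i\<le>j. v * (c i * (of_nat i * (- \<zeta>) ^ (i - 1)) * z ^ p i)
        - u * (c i * (- \<zeta>) ^ i * (of_nat (p i) * z ^ (p i - 1)))) / of_nat j) (at w)"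
    unfolding zernike_primitive_def c_def p_def z_def \<zeta>_def
    by (intro DERIV_cdivide DERIV_sum has_field_derivative_monomial_on_line)
  also have "(\<Sum>i\<le>j. v * (c i * (of_nat i * (- \<zeta>) ^ (i - 1)) * z ^ p i)
        - u * (c i * (- \<zeta>) ^ i * (of_nat (p i) * z ^ (p i - 1))))
      = of_nat j * (v * zernike_bivariate n (j - 1) z \<zeta> - u * zernike_bivariate n j z \<zeta>)"
    unfolding sum_subtractf sum_distrib_left[symmetric] c_def p_def
      zernike_primitive_dz_sum[OF assms(1)] zernike_primitive_dzeta_sum[OF assms]
    by (simp add: algebra_simps)
  finally show ?thesis
    using assms(1) by (simp add: z_def \<zeta>_def)
qed

lemma sum_telescope_weighted:
  fixes f :: "nat \<Rightarrow> 'a::comm_ring_1"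
  shows "(\<Sum>j=1..k. r ^ (k - j) * (f j - r * f (j - 1))) = f k - r ^ k * f 0"
proof (induction k)
  case (Suc k)
  have "(\<Sum>j=1..k. r ^ (Suc k - j) * (f j - r * f (j - 1)))
      = r * (\<Sum>j=1..k. r ^ (k - j) * (f j - r * f (j - 1)))"
    unfolding sum_distrib_left by (intro sum.cong refl) (simp add: Suc_diff_le)
  also have "\<dots> = r * (f k - r ^ k * f 0)"
    by (simp only: Suc.IH)
  finally show ?case
    by (simp add: algebra_simps)
qed simp

(*
  An antiderivative of zernike_bivariate n k along z = P - w u, \<zeta> = Q - w v when u v = 1.
  Writing M j for zernike_bivariate n j, the j-th primitive has derivative v M (j - 1) - u M j;
  the weights (v v)^(k - j) make these telescope, and the last summand supplies the remaining
  M 0 = z^n.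
*)
definition chord_primitive :: "nat \<Rightarrow> nat \<Rightarrow> 'a \<Rightarrow> 'a \<Rightarrow> 'a \<Rightarrow> 'a \<Rightarrow> 'a \<Rightarrow> 'a::field" where
  "chord_primitive n k P Q u v w =
     - v * ((\<Sum>j=1..k. (v * v) ^ (k - j) * zernike_primitive n j (P - w * u) (Q - w * v))
            + (v * v) ^ k * (P - w * u) ^ (n + 1) / of_nat (n + 1))"

lemma chord_primitive_on_circle:
  fixes P Q u v w :: "'a::field"
  assumes "(Q - w * v) * (P - w * u) = 1"
  shows "chord_primitive n k P Q u v w = - v * (v * v) ^ k * (P - w * u) ^ (n + 1) / of_nat (n + 1)"
  using assms by (simp add: chord_primitive_def zernike_primitive_eq_0_on_circle)

lemma has_field_derivative_power_Suc_on_line: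
  fixes P u w :: "'a::real_normed_field"
  shows "((\<lambda>w. (P - w * u) ^ (n + 1) / of_nat (n + 1)) has_field_derivative - u * (P - w * u) ^ n) (at w)"
proof -
  have "((\<lambda>w. P - w * u) has_field_derivative - u) (at w)"
    by (auto intro!: derivative_eq_intros)
  from DERIV_cdivide[OF DERIV_power_Suc[OF this, of n], of "of_nat (n + 1)"]
  have "((\<lambda>w. (P - w * u) ^ (n + 1) / of_nat (n + 1)) has_field_derivative
      of_nat (n + 1) * (- u * (P - w * u) ^ n) / of_nat (n + 1)) (at w)"
    by (simp add: add.commute)
  moreover have "(of_nat (n + 1) :: 'a) \<noteq> 0"
    by (metis of_nat_neq_0 Suc_eq_plus1)
  ultimately show ?thesis
    by simp
qed

lemma chord_primitive_has_derivative:
  fixes P Q u v w :: "'a::real_normed_field"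
  assumes "k \<le> n" and "u * v = 1"
  shows "(chord_primitive n k P Q u v has_field_derivative
           zernike_bivariate n k (P - w * u) (Q - w * v)) (at w)"
proof -
  define r where "r = v * v"
  define M where "M j = zernike_bivariate n j (P - w * u) (Q - w * v)" for j
  have "((\<lambda>w. r ^ (k - j) * zernike_primitive n j (P - w * u) (Q - w * v)) has_field_derivative
      r ^ (k - j) * (v * M (j - 1) - u * M j)) (at w)" if "j \<in> {1..k}" for j
    using that assms(1) unfolding M_def
    by (intro DERIV_cmult zernike_primitive_has_derivative_on_line) auto
  moreover have "((\<lambda>w. r ^ k * (P - w * u) ^ (n + 1) / of_nat (n + 1)) has_field_derivative
      r ^ k * (- u * M 0)) (at w)"
    unfolding M_def zernike_bivariate_0 times_divide_eq_right[symmetric]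
    by (intro DERIV_cmult has_field_derivative_power_Suc_on_line)
  ultimately have "(chord_primitive n k P Q u v has_field_derivative
      - v * ((\<Sum>j=1..k. r ^ (k - j) * (v * M (j - 1) - u * M j)) + r ^ k * (- u * M 0))) (at w)"
    unfolding chord_primitive_def r_def[symmetric] by (rule DERIV_cmult[OF DERIV_add[OF DERIV_sum]])
  also have "- v * ((\<Sum>j=1..k. r ^ (k - j) * (v * M (j - 1) - u * M j)) + r ^ k * (- u * M 0))
      = (\<Sum>j=1..k. r ^ (k - j) * (M j - r * M (j - 1))) + r ^ k * M 0"
  proof -
    have "- v * (r ^ (k - j) * (v * M (j - 1) - u * M j))
        = r ^ (k - j) * ((u * v) * M j - r * M (j - 1))" for j
      by (simp add: r_def algebra_simps)
    moreover have "- v * (r ^ k * (- u * M 0)) = r ^ k * ((u * v) * M 0)"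
      by (simp add: algebra_simps)
    ultimately show ?thesis
      unfolding distrib_left sum_distrib_left assms(2) by simp
  qed
  also have "\<dots> = M k"
    by (simp only: sum_telescope_weighted diff_add_cancel)
  finally show ?thesis
    unfolding M_def .
qed

definition fanbeam_zernike_formula :: "nat \<Rightarrow> nat \<Rightarrow> real \<Rightarrow> real \<Rightarrow> complex" where
  "fanbeam_zernike_formula n k \<beta> \<phi> =
     cis ((real n - 2 * real k) * \<phi>)
     * (cis (real (n + 1) * (\<beta> - \<phi>)) + (-1) ^ n * cis (- (real (n + 1) * (\<beta> - \<phi>))))
     / of_nat (n + 1)"

lemma cis_add_sign_cis:
  "cis t + (-1) ^ n * cis (- t) =
     2 * (if even n then complex_of_real (cos t) else \<i> * complex_of_real (sin t))"
  by (cases "even n") (simp_all add: complex_eq_iff)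

lemma fanbeam_zernike_formula_eq:
  "fanbeam_zernike_formula n k \<beta> \<phi> =
     2 * exp (\<i> * of_int (int n - 2 * int k) * of_real \<phi>) / of_nat (n + 1)
     * (if even n then of_real (cos (real (n + 1) * (\<beta> - \<phi>)))
        else \<i> * of_real (sin (real (n + 1) * (\<beta> - \<phi>))))"
proof -
  have "cis ((real n - 2 * real k) * \<phi>) = exp (\<i> * of_int (int n - 2 * int k) * of_real \<phi>)"
    by (simp add: cis_conv_exp mult_ac)
  then show ?thesis
    unfolding fanbeam_zernike_formula_def cis_add_sign_cis by (simp add: mult_ac)
qed

lemma cis_add_real_multiple_pi: "cis (x + real m * pi) = (-1) ^ m * cis x"
proof -
  have "cis (x + real m * pi) = cis x * cis pi ^ m"
    by (simp only: Complex.DeMoivre cis_mult)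
  then show ?thesis
    by simp
qed

lemma fanbeam_zernike_formula_shift:
  "fanbeam_zernike_formula n k \<beta> (\<phi> + pi) = - fanbeam_zernike_formula n k \<beta> \<phi>"
proof -
  define X where "X = (real n - 2 * real k) * \<phi>"
  define T where "T = real (n + 1) * (\<beta> - \<phi>)"
  have "(-1) ^ (2 * k) * cis ((real n - 2 * real k) * (\<phi> + pi)) = (-1) ^ n * cis X"
    unfolding X_def cis_add_real_multiple_pi[symmetric] by (simp add: algebra_simps)
  then have X: "cis ((real n - 2 * real k) * (\<phi> + pi)) = (-1) ^ n * cis X"
    by simp
  have "cis T = (-1) ^ (n + 1) * cis (real (n + 1) * (\<beta> - (\<phi> + pi)))"
    unfolding T_def cis_add_real_multiple_pi[symmetric] by (simp add: algebra_simps)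
  then have T: "cis (real (n + 1) * (\<beta> - (\<phi> + pi))) = (-1) ^ (n + 1) * cis T"
    by (simp add: power_add)
  have T': "cis (- (real (n + 1) * (\<beta> - (\<phi> + pi)))) = (-1) ^ (n + 1) * cis (- T)"
    unfolding T_def cis_add_real_multiple_pi[symmetric] by (simp add: algebra_simps)
  show ?thesis
    unfolding fanbeam_zernike_formula_def X T T' X_def[symmetric] T_def[symmetric]
    by (simp add: algebra_simps add_divide_distrib diff_divide_distrib)
qed

lemma fanbeam_zernike_formula_cnj:
  assumes "k \<le> n"
  shows "(-1) ^ n * cnj (fanbeam_zernike_formula n (n - k) \<beta> \<phi>) = fanbeam_zernike_formula n k \<beta> \<phi>"
proof -
  have "cnj (cis ((real n - 2 * real (n - k)) * \<phi>)) = cis ((real n - 2 * real k) * \<phi>)"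
    using assms by (simp add: cis_cnj algebra_simps)
  then show ?thesis
    unfolding fanbeam_zernike_formula_def complex_cnj_mult complex_cnj_divide
    by (cases "even n") (simp_all add: cis_cnj algebra_simps)
qed

lemma cis_chord_endpoint: "cis \<beta> - complex_of_real (2 * cos (\<beta> - \<phi>)) * cis \<phi> = - cis (2 * \<phi> - \<beta>)"
proof -
  have "complex_of_real (2 * cos (\<beta> - \<phi>)) = cis (\<beta> - \<phi>) + cis (- (\<beta> - \<phi>))"
    by (simp add: complex_eq_iff cos_diff sin_diff)
  then have "complex_of_real (2 * cos (\<beta> - \<phi>)) * cis \<phi> = cis (\<beta> - \<phi> + \<phi>) + cis (- (\<beta> - \<phi>) + \<phi>)"
    by (simp add: distrib_right cis_mult)
  also have "\<dots> = cis \<beta> + cis (2 * \<phi> - \<beta>)"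
    by (simp add: algebra_simps)
  finally show ?thesis
    by simp
qed

lemma cis_chord_endpoint_powers:
  "- cis (- \<phi>) * (cis (- \<phi>) * cis (- \<phi>)) ^ k * ((- cis (2 * \<phi> - \<beta>)) ^ (n + 1) - cis \<beta> ^ (n + 1))
   = cis ((real n - 2 * real k) * \<phi>)
     * (cis (real (n + 1) * (\<beta> - \<phi>)) + (-1) ^ n * cis (- (real (n + 1) * (\<beta> - \<phi>))))"
proof -
  define c where "c = cis (- \<phi>) * (cis (- \<phi>) * cis (- \<phi>)) ^ k"
  have c: "c = cis (- ((2 * real k + 1) * \<phi>))"
    unfolding c_def cis_mult Complex.DeMoivre by (rule arg_cong[where f = cis]) (simp add: algebra_simps)
  have e1: "c * cis \<beta> ^ (n + 1) = cis ((real n - 2 * real k) * \<phi>) * cis (real (n + 1) * (\<beta> - \<phi>))"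
    unfolding c cis_mult Complex.DeMoivre by (rule arg_cong[where f = cis]) (simp add: algebra_simps)
  have e2: "c * cis (2 * \<phi> - \<beta>) ^ (n + 1)
      = cis ((real n - 2 * real k) * \<phi>) * cis (- (real (n + 1) * (\<beta> - \<phi>)))"
    unfolding c cis_mult Complex.DeMoivre by (rule arg_cong[where f = cis]) (simp add: algebra_simps)
  have "(- cis (2 * \<phi> - \<beta>)) ^ (n + 1) = - ((-1) ^ n * cis (2 * \<phi> - \<beta>) ^ (n + 1))"
    by (subst power_minus) simp
  then have "- c * ((- cis (2 * \<phi> - \<beta>)) ^ (n + 1) - cis \<beta> ^ (n + 1))
      = c * cis \<beta> ^ (n + 1) + (-1) ^ n * (c * cis (2 * \<phi> - \<beta>) ^ (n + 1))"
    by (simp add: algebra_simps)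
  also have "\<dots> = cis ((real n - 2 * real k) * \<phi>)
     * (cis (real (n + 1) * (\<beta> - \<phi>)) + (-1) ^ n * cis (- (real (n + 1) * (\<beta> - \<phi>))))"
    unfolding e1 e2 by (simp only: distrib_left mult.left_commute)
  finally show ?thesis
    unfolding c_def by (simp only: mult_minus_left)
qed

lemma fanbeam_cnj: "fanbeam (\<lambda>z. cnj (f z)) \<beta> \<phi> = cnj (fanbeam f \<beta> \<phi>)"
  unfolding fanbeam_def chord_integral_def by (simp add: integral_cnj)

lemma fanbeam_cmult: "fanbeam (\<lambda>z. c * f z) \<beta> \<phi> = c * fanbeam f \<beta> \<phi>"
  unfolding fanbeam_def chord_integral_def by simp

lemma chord_integral_zernike_bivariate:
  assumes "k \<le> n" and "0 \<le> cos (\<beta> - \<phi>)"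
  shows "chord_integral (\<lambda>z. zernike_bivariate n k z (cnj z)) \<beta> \<phi> = fanbeam_zernike_formula n k \<beta> \<phi>"
proof -
  define P where "P = cis \<beta>"
  define Q where "Q = cis (- \<beta>)"
  define u where "u = cis \<phi>"
  define v where "v = cis (- \<phi>)"
  define L where "L = 2 * cos (\<beta> - \<phi>)"
  define F where "F = chord_primitive n k P Q u v"
  have point: "Complex (cos \<beta> - l * cos \<phi>) (sin \<beta> - l * sin \<phi>) = P - of_real l * u" for l
    by (simp add: complex_eq_iff P_def u_def)
  have point_cnj: "cnj (P - of_real l * u) = Q - of_real l * v" for l
    by (simp add: P_def Q_def u_def v_def cis_cnj)
  have "((\<lambda>l. zernike_bivariate n k (P - of_real l * u) (Q - of_real l * v)) has_integral
      F (of_real L) - F (of_real 0)) {0..L}"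
  proof (rule fundamental_theorem_of_calculus[of 0 L "\<lambda>l. F (of_real l)"])
    show "0 \<le> L"
      using assms(2) by (simp add: L_def)
    have "u * v = 1"
      by (simp add: u_def v_def cis_mult)
    then show "((\<lambda>l. F (of_real l)) has_vector_derivative
        zernike_bivariate n k (P - of_real l * u) (Q - of_real l * v)) (at l within {0..L})" for l
      unfolding F_def by (intro has_vector_derivative_real_field chord_primitive_has_derivative assms(1))
  qed
  then have "chord_integral (\<lambda>z. zernike_bivariate n k z (cnj z)) \<beta> \<phi> = F (of_real L) - F 0"
    unfolding chord_integral_def point point_cnj L_def[symmetric] by (simp add: integral_unique)
  moreover have "F 0 = - v * (v * v) ^ k * P ^ (n + 1) / of_nat (n + 1)"
    using chord_primitive_on_circle[of Q 0 v P u n k] by (simp add: F_def P_def Q_def cis_mult)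
  moreover have "F (of_real L) = - v * (v * v) ^ k * (- cis (2 * \<phi> - \<beta>)) ^ (n + 1) / of_nat (n + 1)"
  proof -
    have z: "P - of_real L * u = - cis (2 * \<phi> - \<beta>)"
      unfolding P_def u_def L_def by (rule cis_chord_endpoint)
    then have "Q - of_real L * v = - cis (\<beta> - 2 * \<phi>)"
      using point_cnj[of L] by (simp add: cis_cnj)
    with z show ?thesis
      using chord_primitive_on_circle[of Q "of_real L" v P u n k] by (simp add: F_def cis_mult)
  qed
  ultimately have "chord_integral (\<lambda>z. zernike_bivariate n k z (cnj z)) \<beta> \<phi>
      = - v * (v * v) ^ k * ((- cis (2 * \<phi> - \<beta>)) ^ (n + 1) - P ^ (n + 1)) / of_nat (n + 1)"
    by (simp add: algebra_simps add_divide_distrib diff_divide_distrib)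
  then show ?thesis
    unfolding fanbeam_zernike_formula_def v_def P_def cis_chord_endpoint_powers .
qed

lemma fanbeam_zernike_bivariate:
  assumes "k \<le> n"
  shows "fanbeam (\<lambda>z. zernike_bivariate n k z (cnj z)) \<beta> \<phi> = fanbeam_zernike_formula n k \<beta> \<phi>"
proof (cases "0 \<le> cos (\<beta> - \<phi>)")
  case True
  then show ?thesis
    by (simp add: fanbeam_def chord_integral_zernike_bivariate assms)
next
  case False
  have "cos (\<beta> - (\<phi> + pi)) = - cos (\<beta> - \<phi>)"
    by (simp add: cos_diff)
  with False show ?thesis
    by (simp add: fanbeam_def chord_integral_zernike_bivariate assms fanbeam_zernike_formula_shift)
qed

theorem theorem2:
  fixes n k :: nat and \<beta> \<phi> :: real
  assumes "k \<le> n"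
    and "\<beta> \<in> {0..<2 * pi}" and "\<phi> \<in> {0..<2 * pi}"
  shows "fanbeam (zernike n k) \<beta> \<phi> =
    2 * exp (\<i> * of_int (int n - 2 * int k) * of_real \<phi>) / of_nat (n + 1)
    * (if even n then of_real (cos (real (n + 1) * (\<beta> - \<phi>)))
       else \<i> * of_real (sin (real (n + 1) * (\<beta> - \<phi>))))"
proof -
  have "fanbeam (zernike n k) \<beta> \<phi> = fanbeam_zernike_formula n k \<beta> \<phi>"
  proof (cases "k \<le> n div 2")
    case True
    then have "zernike n k = (\<lambda>z. zernike_bivariate n k z (cnj z))"
      by (simp add: fun_eq_iff zernike_def zernike_low_eq_bivariate)
    then show ?thesis
      using assms(1) by (simp add: fanbeam_zernike_bivariate)
  next
    case False
    then have "zernike n k = (\<lambda>z. (-1) ^ n * cnj (zernike_bivariate n (n - k) z (cnj z)))"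
      by (simp add: fun_eq_iff zernike_def zernike_low_eq_bivariate)
    then show ?thesis
      using assms(1)
      by (simp add: fanbeam_cmult fanbeam_cnj fanbeam_zernike_bivariate fanbeam_zernike_formula_cnj)
  qed
  then show ?thesis
    by (simp only: fanbeam_zernike_formula_eq)
qed

end
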